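(* Let $\sigma$ be the continuous schedule constructed from an optimal solution $\{y^F_j\}$ of $\mathsf{LP}_\mathsf{primal}$ as described in the context, and for $\lambda\in(0,1]$ let $\sigma^\lambda$ be its stretch by factor $1/\lambda$. If $\lambda$ is drawn at random from $[0,1]$ with probability density $f(v)=2v$, then $$\mathbb{E}\Big[\sum_{j\in J} w_j\, C_{\sigma^\lambda}(j)\Big]\ \le\ 2\sum_{j\in J} w_j\int_0^1 \tilde C_j(v)\,dv .$$
   Context: Co-flow scheduling: $m$ input ports, $m$ output ports, jobs $j\in J$ with weights $w_j\ge0$, integer release times $r_j\ge0$, and nonnegative integer demands $d^j_{io}$ (packets to send from input port $i$ to output port $o$). In each integer time slot $t$ (the interval $[t-1,t)$) each input port sends and each output port receives at most one packet; packets of $j$ may only be sent in slots $t>r_j$. Let $T$ be a positive integer time horizon. A configuration for job $j$ is a set $F$ of triples $(i,o,t)$ with $i,o\in[m]$, $t\in\{r_j+1,\dots,T\}$, such that for each $(i,o)$ exactly $d^j_{io}$ triples of $F$ have ports $(i,o)$, and for each $(i,t)$ at most one triple of $F$ has input port $i$ and time $t$, and for each $(o,t)$ at most one triple has output port $o$ and time $t$. Let $\mathcal F(j)$ be the set of configurations of $j$ and $C^F_j=\max\{t:(i,o,t)\in F\}$. $\mathsf{LP}_\mathsf{primal}$ is: minimize $\sum_j w_j\sum_{F\in\mathcal F(j)}C^F_j y^F_j$ subject to $\sum_{F\in\mathcal F(j)}y^F_j\ge1$ for all $j$; $\sum_{j,o}\sum_{F\in\mathcal F(j):(i,o,t)\in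 F}y^F_j\le1$ for all $i\in[m],t\in[T]$; $\sum_{j,i}\sum_{F\in\mathcal F(j):(i,o,t)\in F}y^F_j\le1$ for all $o\in[m],t\in[T]$; $y\ge0$. Given an optimal solution $y$, set $x^{jt}_{io}=\sum_{F\in\mathcal F(j):(i,o,t)\in F}y^F_j$. The continuous schedule $\sigma$ transfers data of job $j$ from $i$ to $o$ at rate $\sigma_{io,j}(\tau)=x^{jt}_{io}$ for all $\tau\in[t-1,t)$ (realized, via a Birkhoff–von Neumann decomposition of the fractional matching of slot $t$, by integral matchings spread uniformly over $[t-1,t)$). For $v\in[0,1]$, $\tilde C_j(v)$ is the earliest time $\tau$ such that $\int_0^\tau\sigma_{io,j}(s)\,ds\ge v\,d^j_{io}$ for all $i,o$. The stretched schedule $\sigma^\lambda$ schedules in $[\tau_1/\lambda,\tau_2/\lambda)$ whatever matching $\sigma$ schedules in $[\tau_1,\tau_2)$; thus the amount of job $j$'s $(i,o)$ data transferred by time $\tau$ in $\sigma^\lambda$ is $\frac1\lambda\int_0^{\lambda\tau}\sigma_{io,j}(s)\,ds$. $C_{\sigma^\lambda}(j)$ is the earliest time at which, in $\sigma^\lambda$, at least $d^j_{io}$ units of job $j$'s data have been transferred from $i$ to $o$ for every pair $(i,o)$. *)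

theory Defs
  imports "HOL-Analysis.Analysis"
begin

text \<open>Ports are [m] = {1..m}, time slots are {1..T}; slot t is the interval [t-1,t).
  A triple (i,q,t) is represented as (i,(q,t)) :: nat \<times> nat \<times> nat.\<close>

type_synonym triple = "nat \<times> nat \<times> nat"

definition is_config ::
  "nat \<Rightarrow> nat \<Rightarrow> ('j \<Rightarrow> nat) \<Rightarrow> ('j \<Rightarrow> nat \<Rightarrow> nat \<Rightarrow> nat) \<Rightarrow> 'j \<Rightarrow> triple set \<Rightarrow> bool" where
  "is_config m T r d j F \<longleftrightarrow>
     F \<subseteq> {1..m} \<times> {1..m} \<times> {r j + 1..T} \<and>
     (\<forall>i\<in>{1..m}. \<forall>q\<in>{1..m}. card {e \<in> F. fst e = i \<and> fst (snd e) = q} = d j i q) \<and>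
     (\<forall>i t. card {e \<in> F. fst e = i \<and> snd (snd e) = t} \<le> 1) \<and>
     (\<forall>q t. card {e \<in> F. fst (snd e) = q \<and> snd (snd e) = t} \<le> 1)"

definition configs ::
  "nat \<Rightarrow> nat \<Rightarrow> ('j \<Rightarrow> nat) \<Rightarrow> ('j \<Rightarrow> nat \<Rightarrow> nat \<Rightarrow> nat) \<Rightarrow> 'j \<Rightarrow> triple set set" where
  "configs m T r d j = {F. is_config m T r d j F}"

text \<open>Completion time of a configuration: largest time slot used (0 for the empty configuration).\<close>
definition config_completion :: "triple set \<Rightarrow> nat" where
  "config_completion F = Sup {t. \<exists>i q. (i, q, t) \<in> F}"

definition lp_feasible ::
  "nat \<Rightarrow> nat \<Rightarrow> 'j set \<Rightarrow> ('j \<Rightarrow> nat) \<Rightarrow> ('j \<Rightarrow> nat \<Rightarrow> nat \<Rightarrow> nat)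
   \<Rightarrow> ('j \<Rightarrow> triple set \<Rightarrow> real) \<Rightarrow> bool" where
  "lp_feasible m T J r d y \<longleftrightarrow>
     (\<forall>j\<in>J. \<forall>F\<in>configs m T r d j. y j F \<ge> 0) \<and>
     (\<forall>j\<in>J. (\<Sum>F\<in>configs m T r d j. y j F) \<ge> 1) \<and>
     (\<forall>i\<in>{1..m}. \<forall>t\<in>{1..T}.
        (\<Sum>j\<in>J. \<Sum>q\<in>{1..m}. \<Sum>F\<in>{F\<in>configs m T r d j. (i, q, t) \<in> F}. y j F) \<le> 1) \<and>
     (\<forall>q\<in>{1..m}. \<forall>t\<in>{1..T}.
        (\<Sum>j\<in>J. \<Sum>i\<in>{1..m}. \<Sum>F\<in>{F\<in>configs m T r d j. (i, q, t) \<in> F}. y j F) \<le> 1)"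

definition lp_objective ::
  "nat \<Rightarrow> nat \<Rightarrow> 'j set \<Rightarrow> ('j \<Rightarrow> real) \<Rightarrow> ('j \<Rightarrow> nat) \<Rightarrow> ('j \<Rightarrow> nat \<Rightarrow> nat \<Rightarrow> nat)
   \<Rightarrow> ('j \<Rightarrow> triple set \<Rightarrow> real) \<Rightarrow> real" where
  "lp_objective m T J w r d y =
     (\<Sum>j\<in>J. w j * (\<Sum>F\<in>configs m T r d j. real (config_completion F) * y j F))"

definition lp_optimal ::
  "nat \<Rightarrow> nat \<Rightarrow> 'j set \<Rightarrow> ('j \<Rightarrow> real) \<Rightarrow> ('j \<Rightarrow> nat) \<Rightarrow> ('j \<Rightarrow> nat \<Rightarrow> nat \<Rightarrow> nat)
   \<Rightarrow> ('j \<Rightarrow> triple set \<Rightarrow> real) \<Rightarrow> bool" where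
  "lp_optimal m T J w r d y \<longleftrightarrow>
     lp_feasible m T J r d y \<and>
     (\<forall>y'. lp_feasible m T J r d y' \<longrightarrow> lp_objective m T J w r d y \<le> lp_objective m T J w r d y')"

definition xval ::
  "nat \<Rightarrow> nat \<Rightarrow> ('j \<Rightarrow> nat) \<Rightarrow> ('j \<Rightarrow> nat \<Rightarrow> nat \<Rightarrow> nat) \<Rightarrow> ('j \<Rightarrow> triple set \<Rightarrow> real)
   \<Rightarrow> 'j \<Rightarrow> nat \<Rightarrow> nat \<Rightarrow> nat \<Rightarrow> real" where
  "xval m T r d y j i q t = (\<Sum>F\<in>{F\<in>configs m T r d j. (i, q, t) \<in> F}. y j F)"

text \<open>Rate of the continuous schedule: on [t-1,t) it equals x^{jt}_{io}, i.e. t = floor s + 1.\<close>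
definition sigma_rate ::
  "nat \<Rightarrow> nat \<Rightarrow> ('j \<Rightarrow> nat) \<Rightarrow> ('j \<Rightarrow> nat \<Rightarrow> nat \<Rightarrow> nat) \<Rightarrow> ('j \<Rightarrow> triple set \<Rightarrow> real)
   \<Rightarrow> 'j \<Rightarrow> nat \<Rightarrow> nat \<Rightarrow> real \<Rightarrow> real" where
  "sigma_rate m T r d y j i q s = (if s < 0 then 0 else xval m T r d y j i q (nat \<lfloor>s\<rfloor> + 1))"

definition cum_amount ::
  "nat \<Rightarrow> nat \<Rightarrow> ('j \<Rightarrow> nat) \<Rightarrow> ('j \<Rightarrow> nat \<Rightarrow> nat \<Rightarrow> nat) \<Rightarrow> ('j \<Rightarrow> triple set \<Rightarrow> real)
   \<Rightarrow> 'j \<Rightarrow> nat \<Rightarrow> nat \<Rightarrow> real \<Rightarrow> real" where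
  "cum_amount m T r d y j i q tau = integral {0..tau} (sigma_rate m T r d y j i q)"

definition C_tilde ::
  "nat \<Rightarrow> nat \<Rightarrow> ('j \<Rightarrow> nat) \<Rightarrow> ('j \<Rightarrow> nat \<Rightarrow> nat \<Rightarrow> nat) \<Rightarrow> ('j \<Rightarrow> triple set \<Rightarrow> real)
   \<Rightarrow> 'j \<Rightarrow> real \<Rightarrow> real" where
  "C_tilde m T r d y j v = Inf {tau. 0 \<le> tau \<and>
      (\<forall>i\<in>{1..m}. \<forall>q\<in>{1..m}. cum_amount m T r d y j i q tau \<ge> v * real (d j i q))}"

text \<open>Completion time of job j in the stretched schedule sigma^lambda: the amount transferred
  by time tau in sigma^lambda is (1/lambda) * int_0^{lambda tau} sigma.\<close>
definition C_stretch ::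
  "nat \<Rightarrow> nat \<Rightarrow> ('j \<Rightarrow> nat) \<Rightarrow> ('j \<Rightarrow> nat \<Rightarrow> nat \<Rightarrow> nat) \<Rightarrow> ('j \<Rightarrow> triple set \<Rightarrow> real)
   \<Rightarrow> 'j \<Rightarrow> real \<Rightarrow> real" where
  "C_stretch m T r d y j lam = Inf {tau. 0 \<le> tau \<and>
      (\<forall>i\<in>{1..m}. \<forall>q\<in>{1..m}. (1 / lam) * cum_amount m T r d y j i q (lam * tau) \<ge> real (d j i q))}"

definition lambda_dist :: "real measure" where
  "lambda_dist = density lborel (\<lambda>v. ennreal (2 * v) * indicator {0..1} v)"

end

theory Submission
  imports Defs
begin

text \<open>Scaling the time axis by \<open>1/\<lambda>\<close> and the amount by \<open>1/\<lambda>\<close> turns the completion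
  condition of \<open>\<sigma>\<^sup>\<lambda>\<close> at time \<open>\<tau>\<close> into the condition that a \<open>\<lambda>\<close>-fraction of every demand has
  been sent in \<open>\<sigma>\<close> by time \<open>\<lambda>\<tau>\<close>, so \<open>C_stretch \<lambda> = C_tilde \<lambda> / \<lambda>\<close>. Against the density
  \<open>2\<lambda>\<close> the factor \<open>\<lambda>\<close> cancels and the expectation equals the right-hand side. Feasibility
  of the LP is needed only to make \<open>C_tilde v\<close> a time in \<open>[0,T]\<close> for \<open>v \<le> 1\<close>: every
  configuration schedules all of \<open>d\<^sup>j\<^sub>i\<^sub>o\<close> within the horizon, so \<open>\<sigma>\<close> has sent at least
  \<open>d\<^sup>j\<^sub>i\<^sub>o\<close> by time \<open>T\<close>.\<close>

definition fraction_sent_times ::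
  "nat \<Rightarrow> nat \<Rightarrow> ('j \<Rightarrow> nat) \<Rightarrow> ('j \<Rightarrow> nat \<Rightarrow> nat \<Rightarrow> nat) \<Rightarrow> ('j \<Rightarrow> triple set \<Rightarrow> real)
   \<Rightarrow> 'j \<Rightarrow> real \<Rightarrow> real set" where
  "fraction_sent_times m T r d y j v = {tau. 0 \<le> tau \<and>
      (\<forall>i\<in>{1..m}. \<forall>q\<in>{1..m}. cum_amount m T r d y j i q tau \<ge> v * real (d j i q))}"

lemma C_tilde_eq_Inf: "C_tilde m T r d y j v = Inf (fraction_sent_times m T r d y j v)"
  by (simp add: C_tilde_def fraction_sent_times_def)

lemma bdd_below_fraction_sent_times: "bdd_below (fraction_sent_times m T r d y j v)"
  by (rule bdd_belowI[of _ 0]) (simp add: fraction_sent_times_def)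

lemma has_integral_sigma_rate:
  "(sigma_rate m T r d y j i q has_integral (\<Sum>t\<in>{1..n}. xval m T r d y j i q t)) {0..real n}"
proof (induction n)
  case 0
  then show ?case using has_integral_refl(2)[of "sigma_rate m T r d y j i q" 0] by simp
next
  case (Suc n)
  let ?x = "xval m T r d y j i q (Suc n)"
  have "((\<lambda>s. ?x) has_integral ?x) {real n..real (Suc n)}"
    using has_integral_const_real[of ?x "real n" "real (Suc n)"] by simp
  then have last_slot: "(sigma_rate m T r d y j i q has_integral ?x) {real n..real (Suc n)}"
  proof (rule has_integral_spike[rotated 2])
    fix s assume s: "s \<in> {real n..real (Suc n)} - {real (Suc n)}"
    then have "nat \<lfloor>s\<rfloor> = n"
      by (simp add: floor_eq_iff nat_eq_iff)
    then show "sigma_rate m T r d y j i q s = ?x"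
      using s by (simp add: sigma_rate_def)
  qed simp
  have "(sigma_rate m T r d y j i q has_integral (\<Sum>t\<in>{1..n}. xval m T r d y j i q t) + ?x)
          {0..real (Suc n)}"
    by (rule has_integral_combine[OF _ _ Suc last_slot]) auto
  then show ?case by simp
qed

lemma cum_amount_of_nat: "cum_amount m T r d y j i q (real n) = (\<Sum>t\<in>{1..n}. xval m T r d y j i q t)"
  unfolding cum_amount_def by (rule integral_unique[OF has_integral_sigma_rate])

lemma finite_configs: "finite (configs m T r d j)"
proof (rule finite_subset)
  show "configs m T r d j \<subseteq> Pow ({1..m} \<times> {1..m} \<times> {r j + 1..T})"
    by (auto simp: configs_def is_config_def)
qed simp

lemma card_config_slots:
  assumes F: "is_config m T r d j F" and i: "i \<in> {1..m}" and q: "q \<in> {1..m}"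
  shows "card {t\<in>{1..T}. (i, q, t) \<in> F} = d j i q"
proof -
  let ?E = "{e \<in> F. fst e = i \<and> fst (snd e) = q}"
  have "F \<subseteq> {1..m} \<times> {1..m} \<times> {r j + 1..T}" using F unfolding is_config_def by blast
  then have "{t\<in>{1..T}. (i, q, t) \<in> F} = (\<lambda>e. snd (snd e)) ` ?E"
    by (force intro: rev_image_eqI)
  moreover have "inj_on (\<lambda>e. snd (snd e)) ?E"
    by (auto simp: inj_on_def prod_eq_iff)
  ultimately show ?thesis
    using F i q by (simp add: card_image is_config_def)
qed

lemma demand_le_sum_xval:
  assumes feas: "lp_feasible m T J r d y" and j: "j \<in> J" and i: "i \<in> {1..m}" and q: "q \<in> {1..m}"
  shows "real (d j i q) \<le> (\<Sum>t\<in>{1..T}. xval m T r d y j i q t)"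
proof -
  let ?C = "configs m T r d j"
  have "(\<Sum>t\<in>{1..T}. xval m T r d y j i q t)
      = (\<Sum>t\<in>{1..T}. \<Sum>F\<in>{F\<in>?C. (i, q, t) \<in> F}. y j F)"
    by (simp add: xval_def)
  also have "\<dots> = (\<Sum>F\<in>?C. \<Sum>t\<in>{t\<in>{1..T}. (i, q, t) \<in> F}. y j F)"
    by (rule sum.swap_restrict) (auto simp: finite_configs)
  also have "\<dots> = (\<Sum>F\<in>?C. real (d j i q) * y j F)"
  proof (rule sum.cong[OF refl])
    fix F assume "F \<in> ?C"
    then have "card {t\<in>{1..T}. (i, q, t) \<in> F} = d j i q"
      using card_config_slots[of m T r d j F, OF _ i q] by (simp add: configs_def)
    then show "(\<Sum>t\<in>{t\<in>{1..T}. (i, q, t) \<in> F}. y j F) = real (d j i q) * y j F"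
      by simp
  qed
  also have "\<dots> = real (d j i q) * (\<Sum>F\<in>?C. y j F)"
    by (simp add: sum_distrib_left)
  finally show ?thesis
    using feas j unfolding lp_feasible_def
    by (metis mult.right_neutral mult_left_mono of_nat_0_le_iff)
qed

lemma horizon_in_fraction_sent_times:
  assumes feas: "lp_feasible m T J r d y" and j: "j \<in> J" and v: "v \<le> 1"
  shows "real T \<in> fraction_sent_times m T r d y j v"
proof -
  have "v * real (d j i q) \<le> cum_amount m T r d y j i q (real T)"
    if "i \<in> {1..m}" "q \<in> {1..m}" for i q
  proof -
    have "v * real (d j i q) \<le> real (d j i q)"
      using mult_right_mono[OF v, of "real (d j i q)"] by simp
    then show ?thesis
      using demand_le_sum_xval[OF feas j that] by (simp add: cum_amount_of_nat)
  qed
  then show ?thesis unfolding fraction_sent_times_def by simp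
qed

lemma C_tilde_bounds:
  assumes "lp_feasible m T J r d y" and "j \<in> J" and "v \<le> 1"
  shows "0 \<le> C_tilde m T r d y j v" and "C_tilde m T r d y j v \<le> real T"
proof -
  note T = horizon_in_fraction_sent_times[OF assms]
  show "0 \<le> C_tilde m T r d y j v"
    unfolding C_tilde_eq_Inf
  proof (rule cInf_greatest)
    show "fraction_sent_times m T r d y j v \<noteq> {}" using T by blast
  qed (simp add: fraction_sent_times_def)
  show "C_tilde m T r d y j v \<le> real T"
    unfolding C_tilde_eq_Inf by (rule cInf_lower[OF T bdd_below_fraction_sent_times])
qed

lemma C_tilde_zero: "C_tilde m T r d y j 0 = 0"
  unfolding C_tilde_def cum_amount_def by (rule cInf_eq_minimum) auto

lemma mono_on_C_tilde:
  assumes feas: "lp_feasible m T J r d y" and j: "j \<in> J"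
  shows "mono_on {0..1} (C_tilde m T r d y j)"
proof (rule mono_onI)
  fix u v :: real assume "u \<in> {0..1}" "v \<in> {0..1}" "u \<le> v"
  then have "fraction_sent_times m T r d y j v \<subseteq> fraction_sent_times m T r d y j u"
    unfolding fraction_sent_times_def
    by (auto intro: order_trans[OF mult_right_mono[of u v]])
  moreover have "fraction_sent_times m T r d y j v \<noteq> {}"
    using horizon_in_fraction_sent_times[OF feas j] \<open>v \<in> {0..1}\<close> by auto
  ultimately show "C_tilde m T r d y j u \<le> C_tilde m T r d y j v"
    unfolding C_tilde_eq_Inf by (intro cInf_superset_mono bdd_below_fraction_sent_times)
qed

lemma integrable_C_tilde:
  assumes feas: "lp_feasible m T J r d y" and j: "j \<in> J"
  shows "integrable lborel (\<lambda>v. indicator {0..1} v *\<^sub>R C_tilde m T r d y j v)"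
proof (rule integrableI_bounded_set[where A="{0..1}" and B="real T"])
  have "C_tilde m T r d y j \<in> borel_measurable (restrict_space borel {0..1})"
    by (rule borel_measurable_mono_on_fnc[OF mono_on_C_tilde[OF feas j]])
  then show "(\<lambda>v. indicator {0..1} v *\<^sub>R C_tilde m T r d y j v) \<in> borel_measurable lborel"
    by (subst (asm) borel_measurable_restrict_space_iff) auto
  show "AE v in lborel. v \<in> {0..1} \<longrightarrow> norm (indicator {0..1} v *\<^sub>R C_tilde m T r d y j v) \<le> real T"
    using C_tilde_bounds[OF feas j] by (auto simp: indicator_def)
qed auto

lemma Inf_image_divide:
  fixes S :: "real set"
  assumes "0 < c" and "S \<noteq> {}" and "bdd_below S"
  shows "Inf ((\<lambda>x. x / c) ` S) = Inf S / c"
  using continuous_at_Inf_mono[of "\<lambda>x. x / c" S] assms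
  by (simp add: mono_def divide_right_mono continuous_intros)

lemma C_stretch_eq_C_tilde_divide:
  assumes feas: "lp_feasible m T J r d y" and j: "j \<in> J" and lam: "0 < lam" "lam \<le> 1"
  shows "C_stretch m T r d y j lam = C_tilde m T r d y j lam / lam"
proof -
  let ?S = "{tau. 0 \<le> tau \<and> (\<forall>i\<in>{1..m}. \<forall>q\<in>{1..m}.
          (1 / lam) * cum_amount m T r d y j i q (lam * tau) \<ge> real (d j i q))}"
  have mem: "tau \<in> ?S \<longleftrightarrow> lam * tau \<in> fraction_sent_times m T r d y j lam" for tau
    using lam by (simp add: fraction_sent_times_def zero_le_mult_iff le_divide_eq mult.commute)
  have "?S = (\<lambda>x. x / lam) ` fraction_sent_times m T r d y j lam"
  proof (rule set_eqI)
    show "tau \<in> ?S \<longleftrightarrow> tau \<in> (\<lambda>x. x / lam) ` fraction_sent_times m T r d y j lam" for tau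
      using lam unfolding mem image_iff by (metis nonzero_mult_div_cancel_left order.irrefl
          times_divide_eq_right)
  qed
  moreover have "fraction_sent_times m T r d y j lam \<noteq> {}"
    using horizon_in_fraction_sent_times[OF feas j lam(2)] by auto
  ultimately show ?thesis
    unfolding C_stretch_def C_tilde_eq_Inf
    using Inf_image_divide[OF lam(1) _ bdd_below_fraction_sent_times] by simp
qed

lemma integral_lambda_dist:
  fixes g :: "real \<Rightarrow> real"
  assumes "integrable lambda_dist g"
  shows "(\<integral>x. g x \<partial>lambda_dist) = (\<integral>x. (2 * x * indicator {0..1} x) *\<^sub>R g x \<partial>lborel)"
proof -
  have dens: "lambda_dist = density lborel (\<lambda>x. ennreal (2 * x * indicator {0..1} x))"
    unfolding lambda_dist_def by (intro arg_cong[where f="density lborel"] ext) (simp add: indicator_def)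
  have "g \<in> borel_measurable lambda_dist"
    using assms by (rule borel_measurable_integrable)
  then have "g \<in> borel_measurable lborel"
    unfolding dens by simp
  then show ?thesis
    unfolding dens by (rule integral_density) (auto simp: indicator_def)
qed

lemma mult_C_stretch_eq_C_tilde:
  assumes "lp_feasible m T J r d y" and "j \<in> J"
  shows "v * indicator {0..1} v * C_stretch m T r d y j v = indicator {0..1} v * C_tilde m T r d y j v"
proof (cases "v \<in> {0<..1}")
  case True
  then show ?thesis
    using C_stretch_eq_C_tilde_divide[OF assms, of v] by (simp add: indicator_def)
next
  case False
  then have "v = 0 \<or> v \<notin> {0..1}" by auto
  then show ?thesis by (auto simp: C_tilde_zero)
qed

theorem lemma2:
  fixes m T :: nat and J :: "'j set" and w :: "'j \<Rightarrow> real" and r :: "'j \<Rightarrow> nat"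
    and d :: "'j \<Rightarrow> nat \<Rightarrow> nat \<Rightarrow> nat" and y :: "'j \<Rightarrow> triple set \<Rightarrow> real"
  assumes "finite J"
    and "\<forall>j\<in>J. w j \<ge> 0"
    and "T > 0"
    and "lp_optimal m T J w r d y"
  shows "(\<integral>lam. (\<Sum>j\<in>J. w j * C_stretch m T r d y j lam) \<partial>lambda_dist)
         \<le> 2 * (\<Sum>j\<in>J. w j * (\<integral>v\<in>{0..1}. C_tilde m T r d y j v \<partial>lborel))"
proof -
  have feas: "lp_feasible m T J r d y" using assms(4) by (simp add: lp_optimal_def)
  let ?g = "\<lambda>lam. \<Sum>j\<in>J. w j * C_stretch m T r d y j lam"
  let ?h = "\<lambda>j v. indicator {0..1} v * C_tilde m T r d y j v"
  have rhs_nonneg: "0 \<le> (\<Sum>j\<in>J. w j * (\<integral>v\<in>{0..1}. C_tilde m T r d y j v \<partial>lborel))"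
    using assms(2) C_tilde_bounds(1)[OF feas] unfolding set_lebesgue_integral_def
    by (intro sum_nonneg mult_nonneg_nonneg Bochner_Integration.integral_nonneg)
       (auto simp: indicator_def)
  show ?thesis
  proof (cases "integrable lambda_dist ?g")
    case True
    have "(2 * v * indicator {0..1} v) *\<^sub>R ?g v = (\<Sum>j\<in>J. 2 * w j * ?h j v)" for v
      unfolding real_scaleR_def sum_distrib_left
    proof (rule sum.cong[OF refl])
      fix j assume "j \<in> J"
      then show "2 * v * indicator {0..1} v * (w j * C_stretch m T r d y j v) = 2 * w j * ?h j v"
        using mult_C_stretch_eq_C_tilde[OF feas, of j v] by (simp add: mult_ac)
    qed
    then have "(\<integral>lam. ?g lam \<partial>lambda_dist) = (\<integral>v. (\<Sum>j\<in>J. 2 * w j * ?h j v) \<partial>lborel)"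
      by (simp add: integral_lambda_dist[OF True])
    also have "\<dots> = 2 * (\<Sum>j\<in>J. w j * (\<integral>v\<in>{0..1}. C_tilde m T r d y j v \<partial>lborel))"
      using integrable_C_tilde[OF feas]
      by (simp add: set_lebesgue_integral_def sum_distrib_left mult.assoc)
    finally show ?thesis by simp
  qed (simp add: not_integrable_integral_eq rhs_nonneg)
qed

end
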